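(* Let $\varphi\colon\mathcal{M}\to\mathcal{X}\subseteq\mathcal{E}$ be a smooth lift, where $\mathcal{M}$ is a smooth embedded submanifold of $\mathcal{E}'=\mathcal{E}_1\times\cdots\times\mathcal{E}_d$ (a product of Euclidean spaces) and $\varphi$ is defined on all of $\mathcal{E}'$ and is multilinear in its $d$ arguments. If $\mathcal{M}$ contains a point $(y_1,\dots,y_d)$ with $y_i=0$ for (at least) three indices $i$, and $0=\varphi(y_1,\dots,y_d)$ is not an isolated point of $\mathcal{X}$, then $\varphi$ does not satisfy "2 $\Rightarrow$ 1" at $(y_1,\dots,y_d)$.
   Context: $\mathcal{E}$ and $\mathcal{E}_i$ are finite-dimensional real inner product spaces; $\mathcal{X}=\varphi(\mathcal{M})$. Tangent cone $\mathrm{T}_x\mathcal{X}=\{\lim(x_i-x)/\tau_i: x_i\in\mathcal{X},\tau_i>0,\tau_i\to0\}$; $x$ is stationary for $f$ on $\mathcal{X}$ if $\langle\nabla f(x),v\rangle\ge0$ for all $v\in\mathrm{T}_x\mathcal{X}$. For $g=f\circ\varphi$, $y$ is 2-critical if $(g\circ c)'(0)=0$ and $(g\circ c)''(0)\ge0$ for all smooth curves $c$ in $\mathcal{M}$ with $c(0)=y$. "2 $\Rightarrow$ 1" at $y$: for every twice differentiable $f\colon\mathcal{E}\to\mathbb{R}$, if $y$ is 2-critical for $f\circ\varphi$ then $\varphi(y)$ is stationary for $f$ on $\mathcal{X}$. *)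

theory Defs
  imports "HOL-Analysis.Analysis"
begin

fun pdiff :: "'a::euclidean_space list \<Rightarrow> ('a \<Rightarrow> 'b::real_normed_vector) \<Rightarrow> 'a \<Rightarrow> 'b" where
  "pdiff [] f = f"
| "pdiff (v # vs) f = (\<lambda>x. vector_derivative (\<lambda>t. pdiff vs f (x + t *\<^sub>R v)) (at 0))"

definition smooth_on :: "'a::euclidean_space set \<Rightarrow> ('a \<Rightarrow> 'b::real_normed_vector) \<Rightarrow> bool" where
  "smooth_on U f \<longleftrightarrow> open U \<and>
     (\<forall>vs. set vs \<subseteq> Basis \<longrightarrow>
        continuous_on U (pdiff vs f) \<and>
        (\<forall>x\<in>U. \<forall>v\<in>Basis.
           ((\<lambda>t. pdiff vs f (x + t *\<^sub>R v)) has_vector_derivative pdiff (v # vs) f x) (at 0)))"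

definition grad :: "('a::euclidean_space \<Rightarrow> real) \<Rightarrow> 'a \<Rightarrow> 'a" where
  "grad f x = (\<Sum>b\<in>Basis. frechet_derivative f (at x) b *\<^sub>R b)"

definition embedded_submanifold :: "'a::euclidean_space set \<Rightarrow> bool" where
  "embedded_submanifold M \<longleftrightarrow>
     (\<forall>y\<in>M. \<exists>U k h. open U \<and> y \<in> U \<and>
        (\<forall>j<k. smooth_on U (h j :: 'a \<Rightarrow> real)) \<and>
        (\<forall>x\<in>U. \<forall>c::nat \<Rightarrow> real. (\<Sum>j<k. c j *\<^sub>R grad (h j) x) = 0 \<longrightarrow> (\<forall>j<k. c j = 0)) \<and>
        M \<inter> U = {x\<in>U. \<forall>j<k. h j x = 0})"

text \<open>E' is modelled as a Euclidean space whose orthonormal basis is partitioned into d blocks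
  B 0, ..., B (d-1); the i-th factor E_i is the span of B i, and blk B i x is the i-th
  component of x.\<close>
definition block_structure :: "nat \<Rightarrow> (nat \<Rightarrow> 'a::euclidean_space set) \<Rightarrow> bool" where
  "block_structure d B \<longleftrightarrow> (\<forall>i<d. B i \<subseteq> Basis) \<and>
     (\<forall>i<d. \<forall>j<d. i \<noteq> j \<longrightarrow> B i \<inter> B j = {}) \<and> (\<Union>i<d. B i) = Basis"

definition blk :: "(nat \<Rightarrow> 'a::euclidean_space set) \<Rightarrow> nat \<Rightarrow> 'a \<Rightarrow> 'a" where
  "blk B i x = (\<Sum>b\<in>B i. (x \<bullet> b) *\<^sub>R b)"

definition multilinear :: "nat \<Rightarrow> (nat \<Rightarrow> 'a::euclidean_space set) \<Rightarrow> ('a \<Rightarrow> 'e::real_vector) \<Rightarrow> bool" where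
  "multilinear d B \<phi> \<longleftrightarrow> (\<forall>i<d. \<forall>x. linear (\<lambda>v. \<phi> (x - blk B i x + blk B i v)))"

definition tangent_cone :: "'e::real_normed_vector set \<Rightarrow> 'e \<Rightarrow> 'e set" where
  "tangent_cone X x = {v. \<exists>xs \<tau>. (\<forall>i. xs i \<in> X) \<and> (\<forall>i. \<tau> i > (0::real)) \<and> \<tau> \<longlonglongrightarrow> 0 \<and>
                          (\<lambda>i. (xs i - x) /\<^sub>R \<tau> i) \<longlonglongrightarrow> v}"

definition stationary_on :: "('e::euclidean_space \<Rightarrow> real) \<Rightarrow> 'e set \<Rightarrow> 'e \<Rightarrow> bool" where
  "stationary_on f X x \<longleftrightarrow> (\<forall>v\<in>tangent_cone X x. grad f x \<bullet> v \<ge> 0)"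

definition twice_differentiable :: "('e::euclidean_space \<Rightarrow> real) \<Rightarrow> bool" where
  "twice_differentiable f \<longleftrightarrow> (\<forall>x. f differentiable at x) \<and> (\<forall>x. grad f differentiable at x)"

definition two_critical :: "('a::euclidean_space \<Rightarrow> real) \<Rightarrow> 'a set \<Rightarrow> 'a \<Rightarrow> bool" where
  "two_critical g M y \<longleftrightarrow>
     (\<forall>c a b. a < 0 \<and> 0 < b \<and> smooth_on {a<..<b} (c :: real \<Rightarrow> 'a) \<and> c ` {a<..<b} \<subseteq> M \<and> c 0 = y
        \<longrightarrow> deriv (g \<circ> c) 0 = 0 \<and> deriv (deriv (g \<circ> c)) 0 \<ge> 0)"

definition two_implies_one :: "('a::euclidean_space \<Rightarrow> 'e::euclidean_space) \<Rightarrow> 'a set \<Rightarrow> 'a \<Rightarrow> bool" where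
  "two_implies_one \<phi> M y \<longleftrightarrow>
     (\<forall>f :: 'e \<Rightarrow> real. twice_differentiable f \<longrightarrow> two_critical (f \<circ> \<phi>) M y
        \<longrightarrow> stationary_on f (\<phi> ` M) (\<phi> y))"

end

theory Submission
  imports Defs
begin

text \<open>
  Since 0 is not isolated in \<open>\<phi> ` M\<close>, there is a nonzero tangent vector \<open>v\<close> of \<open>\<phi> ` M\<close> at 0,
  and \<open>f x = \<langle>-v, x\<rangle>\<close> is not stationary there. Yet \<open>y\<close> is 2-critical for \<open>f \<circ> \<phi>\<close>:
  by multilinearity, the partial derivative of \<open>\<phi>\<close> along a basis vector \<open>b\<close> of block \<open>j\<close>
  is \<open>\<phi>\<close> with its \<open>j\<close>-th argument replaced by \<open>b\<close>, which is still bilinear in two other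
  blocks \<open>i, k\<close> on which \<open>y\<close> vanishes. Along any \<open>C\<^sup>1\<close> curve \<open>c\<close> through \<open>y\<close> it is
  therefore \<open>o(t)\<close>, so the derivative of \<open>f \<circ> \<phi> \<circ> c\<close> is \<open>o(t)\<close>, and its first and second
  derivatives vanish at 0.
\<close>

lemma linear_blk: "linear (blk B i)"
  unfolding blk_def linear_iff
  by (simp add: inner_add_left scaleR_add_left sum.distrib scaleR_sum_right)

lemma continuous_on_blk: "continuous_on S (blk B i)"
  using linear_continuous_on linear_conv_bounded_linear linear_blk by blast

lemma tendsto_blk [tendsto_intros]: "(f \<longlongrightarrow> l) F \<Longrightarrow> ((\<lambda>x. blk B i (f x)) \<longlongrightarrow> blk B i l) F"
  using linear_blk linear_conv_bounded_linear bounded_linear.tendsto by blast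

lemma inner_blk_Basis:
  assumes "B i \<subseteq> Basis" "b \<in> Basis"
  shows "blk B i z \<bullet> b = (if b \<in> B i then z \<bullet> b else 0)"
proof -
  have "blk B i z \<bullet> b = (\<Sum>b'\<in>B i. if b' = b then z \<bullet> b else 0)"
    unfolding blk_def inner_sum_left
    by (rule sum.cong) (use assms in \<open>auto simp: inner_Basis\<close>)
  also have "\<dots> = (if b \<in> B i then z \<bullet> b else 0)"
    using finite_subset[OF assms(1) finite_Basis] by simp
  finally show ?thesis .
qed

lemma inner_blk_in_block: "B i \<subseteq> Basis \<Longrightarrow> b \<in> B i \<Longrightarrow> blk B i z \<bullet> b = z \<bullet> b"
  by (metis inner_blk_Basis subsetD)

lemma blk_eqI: "(\<And>b. b \<in> B i \<Longrightarrow> x \<bullet> b = z \<bullet> b) \<Longrightarrow> blk B i x = blk B i z"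
  unfolding blk_def by simp

lemma blk_blk: "B i \<subseteq> Basis \<Longrightarrow> blk B i (blk B i x) = blk B i x"
  by (metis blk_eqI inner_blk_in_block)

lemma blk_Basis: "B i \<subseteq> Basis \<Longrightarrow> b \<in> B i \<Longrightarrow> blk B i b = b"
  by (rule euclidean_eqI) (auto simp: inner_blk_Basis inner_Basis)

lemma blk_blk_disjoint:
  assumes "B i \<subseteq> Basis" "B j \<subseteq> Basis" "B i \<inter> B j = {}"
  shows "blk B i (blk B j x) = 0"
  by (rule euclidean_eqI) (use assms in \<open>auto simp: inner_blk_Basis\<close>)

definition blk_replace :: "(nat \<Rightarrow> 'a::euclidean_space set) \<Rightarrow> nat \<Rightarrow> 'a \<Rightarrow> 'a \<Rightarrow> 'a" where
  "blk_replace B i x v = x - blk B i x + blk B i v"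

lemma blk_replace_self [simp]: "blk_replace B i x x = x"
  by (simp add: blk_replace_def)

lemma blk_replace_blk: "B i \<subseteq> Basis \<Longrightarrow> blk_replace B i x (blk B i v) = blk_replace B i x v"
  by (simp add: blk_replace_def blk_blk)

lemma blk_blk_replace_disjoint:
  assumes "B i \<subseteq> Basis" "B j \<subseteq> Basis" "B i \<inter> B j = {}"
  shows "blk B i (blk_replace B j x v) = blk B i x"
  using assms by (simp add: blk_replace_def linear_add[OF linear_blk] linear_diff[OF linear_blk]
      blk_blk_disjoint)

lemma inner_blk_replace_disjoint:
  assumes "B i \<subseteq> Basis" "B j \<subseteq> Basis" "B i \<inter> B j = {}" "b \<in> B i"
  shows "blk_replace B j x v \<bullet> b = x \<bullet> b"
  by (metis assms blk_blk_replace_disjoint inner_blk_in_block)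

lemma blk_replace_commute:
  assumes "B i \<subseteq> Basis" "B j \<subseteq> Basis" "B i \<inter> B j = {}"
  shows "blk_replace B i (blk_replace B j x u) v = blk_replace B j (blk_replace B i x v) u"
  using blk_blk_replace_disjoint[OF assms] blk_blk_replace_disjoint[OF assms(2,1)] assms(3)
  by (simp add: blk_replace_def Int_commute algebra_simps)

definition linear_in_block :: "(nat \<Rightarrow> 'a::euclidean_space set) \<Rightarrow> nat \<Rightarrow> ('a \<Rightarrow> 'e::real_vector) \<Rightarrow> bool" where
  "linear_in_block B i \<phi> \<longleftrightarrow> (\<forall>x. linear (\<lambda>v. \<phi> (blk_replace B i x v)))"

lemma multilinear_iff_linear_in_block: "multilinear d B \<phi> \<longleftrightarrow> (\<forall>i<d. linear_in_block B i \<phi>)"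
  unfolding multilinear_def linear_in_block_def blk_replace_def ..

lemma linear_in_blockD: "linear_in_block B i \<phi> \<Longrightarrow> linear (\<lambda>v. \<phi> (blk_replace B i x v))"
  unfolding linear_in_block_def by blast

lemma linear_in_block_vanishes:
  assumes "linear_in_block B i \<phi>" "blk B i x = 0"
  shows "\<phi> x = 0"
proof -
  have "blk_replace B i x 0 = x"
    using assms(2) by (simp add: blk_replace_def linear_0[OF linear_blk])
  then show ?thesis
    using linear_0[OF linear_in_blockD[OF assms(1)]] by metis
qed

lemma linear_in_block_expansion:
  assumes "linear_in_block B i \<phi>" "B i \<subseteq> Basis"
  shows "\<phi> x = (\<Sum>b\<in>B i. (x \<bullet> b) *\<^sub>R \<phi> (blk_replace B i x b))"
proof -
  have "\<phi> x = \<phi> (blk_replace B i x (\<Sum>b\<in>B i. (x \<bullet> b) *\<^sub>R b))"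
    using blk_replace_blk[of B i x x] assms(2) by (simp add: blk_def)
  also have "\<dots> = (\<Sum>b\<in>B i. (x \<bullet> b) *\<^sub>R \<phi> (blk_replace B i x b))"
    by (simp add: linear_sum[OF linear_in_blockD[OF assms(1)]]
        linear_cmul[OF linear_in_blockD[OF assms(1)]])
  finally show ?thesis .
qed

lemma linear_in_block_shift:
  assumes "linear_in_block B i \<phi>" "B i \<subseteq> Basis" "b \<in> B i"
  shows "\<phi> (x + s *\<^sub>R b) = \<phi> x + s *\<^sub>R \<phi> (blk_replace B i x b)"
proof -
  have "\<phi> (x + s *\<^sub>R b) = \<phi> (blk_replace B i x (x + s *\<^sub>R b))"
    using blk_Basis[of B i b] assms(2,3)
    by (simp add: blk_replace_def linear_add[OF linear_blk] linear_cmul[OF linear_blk])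
  also have "\<dots> = \<phi> x + s *\<^sub>R \<phi> (blk_replace B i x b)"
    using linear_add[OF linear_in_blockD[OF assms(1)]] linear_cmul[OF linear_in_blockD[OF assms(1)]]
    by simp
  finally show ?thesis .
qed

lemma linear_in_block_blk_replace:
  assumes "linear_in_block B i \<phi>" "B i \<subseteq> Basis" "B j \<subseteq> Basis" "B i \<inter> B j = {}"
  shows "linear_in_block B i (\<lambda>z. \<phi> (blk_replace B j z u))"
  using assms(1) blk_replace_commute[of B i j, symmetric] assms(2-4)
  unfolding linear_in_block_def by simp

lemma bilinear_in_blocks_expansion:
  assumes "linear_in_block B i \<phi>" "linear_in_block B k \<phi>"
    and "B i \<subseteq> Basis" "B k \<subseteq> Basis" "B i \<inter> B k = {}"
  shows "\<phi> x = (\<Sum>b1\<in>B i. \<Sum>b2\<in>B k.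
           ((x \<bullet> b1) * (x \<bullet> b2)) *\<^sub>R \<phi> (blk_replace B k (blk_replace B i x b1) b2))"
  unfolding linear_in_block_expansion[OF assms(1,3), of x]
    linear_in_block_expansion[OF assms(2,4), of "blk_replace B i x _"]
  using assms(3-5) by (simp add: inner_blk_replace_disjoint Int_commute scaleR_sum_right)

lemma bilinear_in_blocks_little_o:
  fixes \<phi> :: "'a::euclidean_space \<Rightarrow> 'e::real_normed_vector" and c :: "real \<Rightarrow> 'a"
  assumes lin: "linear_in_block B i \<phi>" "linear_in_block B k \<phi>"
    and blocks: "B i \<subseteq> Basis" "B k \<subseteq> Basis" "B i \<inter> B k = {}"
    and cont: "continuous_on UNIV \<phi>"
    and y: "blk B i y = 0" "blk B k y = 0"
    and c: "(c has_vector_derivative c') (at 0)" "c 0 = y"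
  shows "((\<lambda>t. \<phi> (c t) /\<^sub>R t) \<longlongrightarrow> 0) (at 0)"
proof -
  define W where "W z b1 b2 = \<phi> (blk_replace B k (blk_replace B i z b1) b2)" for z b1 b2
  have y_i: "y \<bullet> b = 0" if "b \<in> B i" for b
    using inner_blk_in_block[of B i b y] blocks(1) that y(1) by simp
  have y_k: "y \<bullet> b = 0" if "b \<in> B k" for b
    using inner_blk_in_block[of B k b y] blocks(2) that y(2) by simp
  have c_lim: "(c \<longlongrightarrow> y) (at 0)"
    using has_vector_derivative_continuous[OF c(1)] c(2) by (simp add: continuous_at)
  have quotient_lim: "((\<lambda>t. (c t \<bullet> b) / t) \<longlongrightarrow> c' \<bullet> b) (at 0)" if "b \<in> B i" for b
  proof -
    have "((\<lambda>t. c t \<bullet> b) has_real_derivative (c' \<bullet> b)) (at 0)"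
      using bounded_linear.has_vector_derivative[OF bounded_linear_inner_left c(1)]
      by (simp add: has_real_derivative_iff_has_vector_derivative)
    then show ?thesis
      using y_i[OF that] c(2) by (simp add: DERIV_def)
  qed
  have W_lim: "((\<lambda>t. W (c t) b1 b2) \<longlongrightarrow> W y b1 b2) (at 0)" for b1 b2
    unfolding W_def blk_replace_def
    using cont by (intro isCont_tendsto_compose[of _ \<phi>] tendsto_intros c_lim)
      (simp add: continuous_on_eq_continuous_at)
  have "((\<lambda>t. \<Sum>b1\<in>B i. \<Sum>b2\<in>B k. ((c t \<bullet> b1) / t * (c t \<bullet> b2)) *\<^sub>R W (c t) b1 b2)
      \<longlongrightarrow> (\<Sum>b1\<in>B i. \<Sum>b2\<in>B k. ((c' \<bullet> b1) * (y \<bullet> b2)) *\<^sub>R W y b1 b2)) (at 0)"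
    by (intro tendsto_sum tendsto_scaleR tendsto_mult quotient_lim tendsto_inner c_lim
        tendsto_const W_lim)
  moreover have "(\<Sum>b1\<in>B i. \<Sum>b2\<in>B k. ((c' \<bullet> b1) * (y \<bullet> b2)) *\<^sub>R W y b1 b2) = 0"
    by (simp add: y_k)
  moreover have "(\<Sum>b1\<in>B i. \<Sum>b2\<in>B k. ((c t \<bullet> b1) / t * (c t \<bullet> b2)) *\<^sub>R W (c t) b1 b2)
      = \<phi> (c t) /\<^sub>R t" for t
    unfolding bilinear_in_blocks_expansion[OF lin blocks, of "c t"] W_def
    by (simp add: scaleR_sum_right divide_inverse_commute mult.assoc)
  ultimately show ?thesis
    by simp
qed

lemma has_derivative_inner_scaleR_vanishing:
  assumes "continuous (at x) g" "g x = 0"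
  shows "((\<lambda>w. ((w - x) \<bullet> b) *\<^sub>R g w) has_derivative (\<lambda>w. 0)) (at x)"
  unfolding has_derivative_iff_norm
proof (intro conjI)
  show "bounded_linear (\<lambda>w. 0)"
    by simp
  have g0: "((\<lambda>w. norm b * norm (g w)) \<longlongrightarrow> 0) (at x)"
    using assms by (auto intro!: tendsto_eq_intros simp: continuous_at)
  show "((\<lambda>w. norm (((w - x) \<bullet> b) *\<^sub>R g w - ((x - x) \<bullet> b) *\<^sub>R g x - 0) / norm (w - x))
      \<longlongrightarrow> 0) (at x)"
  proof (rule Lim_null_comparison[OF always_eventually g0], rule allI)
    fix w
    have "norm (((w - x) \<bullet> b) *\<^sub>R g w) \<le> norm (w - x) * norm b * norm (g w)"
      by (simp add: mult_right_mono Cauchy_Schwarz_ineq2)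
    then show "norm (norm (((w - x) \<bullet> b) *\<^sub>R g w - ((x - x) \<bullet> b) *\<^sub>R g x - 0) / norm (w - x))
        \<le> norm b * norm (g w)"
      by (cases "w = x") (auto simp: divide_le_eq mult_ac)
  qed
qed

lemma has_derivative_coordinate_shifts_partial:
  fixes \<phi> :: "'a::euclidean_space \<Rightarrow> 'e::real_normed_vector"
  assumes shift: "\<And>b z s. b \<in> Basis \<Longrightarrow> \<phi> (z + s *\<^sub>R b) = \<phi> z + s *\<^sub>R \<psi> b z"
    and cont: "\<And>b. b \<in> Basis \<Longrightarrow> continuous_on UNIV (\<psi> b)"
    and "finite S" "S \<subseteq> Basis"
  shows "((\<lambda>w. \<phi> (x + (\<Sum>b\<in>S. ((w - x) \<bullet> b) *\<^sub>R b)))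
           has_derivative (\<lambda>w. \<Sum>b\<in>S. (w \<bullet> b) *\<^sub>R \<psi> b x)) (at x)"
  using assms(3,4)
proof (induction S rule: finite_induct)
  case empty
  then show ?case
    by simp
next
  case (insert b S)
  define P where "P w = x + (\<Sum>b\<in>S. ((w - x) \<bullet> b) *\<^sub>R b)" for w
  txt \<open>The step along \<open>b\<close> is \<open>((w - x) \<bullet> b) *\<^sub>R \<psi> b (P w)\<close>; replacing \<open>P w\<close> by \<open>x\<close>
    costs \<open>o(|w - x|)\<close> by continuity of \<open>\<psi> b\<close>.\<close>
  have b: "b \<in> Basis"
    using insert by auto
  have "\<phi> (x + (\<Sum>b\<in>insert b S. ((w - x) \<bullet> b) *\<^sub>R b)) = \<phi> (P w + ((w - x) \<bullet> b) *\<^sub>R b)" for w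
    using insert by (simp add: P_def algebra_simps)
  also have "\<phi> (P w + ((w - x) \<bullet> b) *\<^sub>R b) =
      \<phi> (P w) + ((w - x) \<bullet> b) *\<^sub>R \<psi> b x + ((w - x) \<bullet> b) *\<^sub>R (\<psi> b (P w) - \<psi> b x)" for w
    by (simp add: shift[OF b] scaleR_diff_right)
  finally have split: "(\<lambda>w. \<phi> (x + (\<Sum>b\<in>insert b S. ((w - x) \<bullet> b) *\<^sub>R b))) =
      (\<lambda>w. \<phi> (P w) + ((w - x) \<bullet> b) *\<^sub>R \<psi> b x + ((w - x) \<bullet> b) *\<^sub>R (\<psi> b (P w) - \<psi> b x))"
    by (rule ext)
  have "isCont P x"
    unfolding P_def by (intro continuous_intros)
  moreover have "isCont (\<psi> b) (P x)"
    using cont[OF b] by (simp add: continuous_on_eq_continuous_at)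
  ultimately have "isCont (\<lambda>w. \<psi> b (P w)) x"
    by (rule isCont_o2)
  then have "continuous (at x) (\<lambda>w. \<psi> b (P w) - \<psi> b x)"
    by (intro continuous_intros)
  then have "((\<lambda>w. \<phi> (P w) + ((w - x) \<bullet> b) *\<^sub>R \<psi> b x + ((w - x) \<bullet> b) *\<^sub>R (\<psi> b (P w) - \<psi> b x))
      has_derivative (\<lambda>w. (\<Sum>b\<in>S. (w \<bullet> b) *\<^sub>R \<psi> b x) + (w \<bullet> b) *\<^sub>R \<psi> b x + 0)) (at x)"
    using insert.IH insert.prems
    by (intro has_derivative_add has_derivative_inner_scaleR_vanishing)
      (auto simp: P_def intro!: derivative_eq_intros)
  then show ?case
    unfolding split using insert(1,2) by (simp add: add.commute)
qed

lemma has_derivative_coordinate_shifts: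
  fixes \<phi> :: "'a::euclidean_space \<Rightarrow> 'e::real_normed_vector"
  assumes "\<And>b z s. b \<in> Basis \<Longrightarrow> \<phi> (z + s *\<^sub>R b) = \<phi> z + s *\<^sub>R \<psi> b z"
    and "\<And>b. b \<in> Basis \<Longrightarrow> continuous_on UNIV (\<psi> b)"
  shows "(\<phi> has_derivative (\<lambda>w. \<Sum>b\<in>Basis. (w \<bullet> b) *\<^sub>R \<psi> b x)) (at x)"
  using has_derivative_coordinate_shifts_partial[OF assms finite_Basis order_refl, of x]
  by (simp add: euclidean_representation)

lemma smooth_on_imp_continuous_on: "smooth_on U f \<Longrightarrow> continuous_on U f"
  unfolding smooth_on_def by (metis empty_set empty_subsetI pdiff.simps(1))

lemma smooth_on_curve:
  fixes c :: "real \<Rightarrow> 'a::real_normed_vector"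
  assumes "smooth_on S c"
  shows "continuous_on S (pdiff [1] c)"
    and "t \<in> S \<Longrightarrow> (c has_vector_derivative pdiff [1] c t) (at t)"
proof -
  have smooth: "continuous_on S (pdiff vs c) \<and> (\<forall>x\<in>S. \<forall>v\<in>Basis.
      ((\<lambda>t. pdiff vs c (x + t *\<^sub>R v)) has_vector_derivative pdiff (v # vs) c x) (at 0))"
    if "set vs \<subseteq> Basis" for vs
    using assms that unfolding smooth_on_def by blast
  show "continuous_on S (pdiff [1] c)"
    using smooth[of "[1]"] by simp
  assume "t \<in> S"
  then have "((\<lambda>s. c (t + s)) has_vector_derivative pdiff [1] c t) (at ((\<lambda>s. s - t) t))"
    using smooth[of "[]"] by simp
  moreover have "((\<lambda>s. s - t) has_vector_derivative 1) (at t)"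
    by (auto intro!: derivative_eq_intros simp: has_real_derivative_iff_has_vector_derivative[symmetric])
  ultimately show "(c has_vector_derivative pdiff [1] c t) (at t)"
    using vector_diff_chain_at[of "\<lambda>s. s - t" 1 t "\<lambda>s. c (t + s)"] by (simp add: o_def)
qed

lemma deriv_deriv_zero_if_derivative_little_o:
  fixes G D :: "real \<Rightarrow> real"
  assumes S: "open S" "0 \<in> S"
    and G: "\<And>t. t \<in> S \<Longrightarrow> (G has_real_derivative D t) (at t)"
    and D: "D 0 = 0" "((\<lambda>t. D t / t) \<longlongrightarrow> 0) (at 0)"
  shows "deriv G 0 = 0 \<and> deriv (deriv G) 0 = 0"
proof -
  have deriv_G: "deriv G t = D t" if "t \<in> S" for t
    using G[OF that] by (rule DERIV_imp_deriv)
  have "(D has_real_derivative 0) (at 0)"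
    using D by (simp add: DERIV_def)
  then have "(deriv G has_real_derivative 0) (at 0)"
    by (rule has_field_derivative_transform_within_open[OF _ S]) (simp add: deriv_G)
  then show ?thesis
    using deriv_G[OF S(2)] D(1) by (simp add: DERIV_imp_deriv)
qed

lemma two_critical_if_partials_vanish_to_second_order:
  fixes \<phi> :: "'a::euclidean_space \<Rightarrow> 'e::real_inner"
  assumes D\<phi>: "\<And>x. (\<phi> has_derivative (\<lambda>w. \<Sum>b\<in>Basis. (w \<bullet> b) *\<^sub>R \<psi> b x)) (at x)"
    and \<psi>_y: "\<And>b. b \<in> Basis \<Longrightarrow> \<psi> b y = 0"
    and \<psi>_little_o: "\<And>b c c'. b \<in> Basis \<Longrightarrow> (c has_vector_derivative c') (at 0) \<Longrightarrow> c 0 = y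
        \<Longrightarrow> ((\<lambda>t. \<psi> b (c t) /\<^sub>R t) \<longlongrightarrow> 0) (at 0)"
  shows "two_critical ((\<lambda>x. u \<bullet> x) \<circ> \<phi>) M y"
  unfolding two_critical_def
proof (intro allI impI)
  fix c :: "real \<Rightarrow> 'a" and a b :: real
  assume "a < 0 \<and> 0 < b \<and> smooth_on {a<..<b} c \<and> c ` {a<..<b} \<subseteq> M \<and> c 0 = y"
  then have S: "open {a<..<b}" "0 \<in> {a<..<b}" and c: "smooth_on {a<..<b} c" "c 0 = y"
    by auto
  define c' where "c' = pdiff [1] c"
  define h where "h t = (\<Sum>b\<in>Basis. (c' t \<bullet> b) *\<^sub>R \<psi> b (c t))" for t
  have chain: "((\<phi> \<circ> c) has_vector_derivative h t) (at t)" if "t \<in> {a<..<b}" for t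
    using vector_derivative_diff_chain_within[OF smooth_on_curve(2)[OF c(1) that]
        has_derivative_at_withinI[OF D\<phi>]]
    by (simp add: h_def c'_def)
  then have G: "(((\<lambda>x. u \<bullet> x) \<circ> \<phi> \<circ> c) has_real_derivative u \<bullet> h t) (at t)"
    if "t \<in> {a<..<b}" for t
    using bounded_linear.has_vector_derivative[OF bounded_linear_inner_right chain[OF that]]
    by (simp add: has_real_derivative_iff_has_vector_derivative o_def)
  have "h 0 = 0"
    by (simp add: h_def c(2) \<psi>_y)
  have "isCont c' 0"
    using smooth_on_curve(1)[OF c(1)] S by (simp add: c'_def continuous_on_eq_continuous_at)
  then have "((\<lambda>t. \<Sum>b\<in>Basis. (c' t \<bullet> b) *\<^sub>R (\<psi> b (c t) /\<^sub>R t))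
      \<longlongrightarrow> (\<Sum>b\<in>Basis. (c' 0 \<bullet> b) *\<^sub>R 0)) (at 0)"
    using \<psi>_little_o[OF _ smooth_on_curve(2)[OF c(1) S(2)] c(2)]
    by (intro tendsto_intros) (auto simp: isCont_def)
  then have "((\<lambda>t. u \<bullet> (h t /\<^sub>R t)) \<longlongrightarrow> u \<bullet> 0) (at 0)"
    by (intro tendsto_intros) (simp add: h_def scaleR_sum_right mult.commute)
  then have "((\<lambda>t. (u \<bullet> h t) / t) \<longlongrightarrow> 0) (at 0)"
    by (simp add: divide_inverse mult.commute)
  then show "deriv ((\<lambda>x. u \<bullet> x) \<circ> \<phi> \<circ> c) 0 = 0 \<and> 0 \<le> deriv (deriv ((\<lambda>x. u \<bullet> x) \<circ> \<phi> \<circ> c)) 0"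
    using deriv_deriv_zero_if_derivative_little_o[OF S G] \<open>h 0 = 0\<close> by simp
qed

lemma grad_inner: "grad (\<lambda>x. u \<bullet> x) x = u"
  unfolding grad_def
    frechet_derivative_at[OF bounded_linear_imp_has_derivative[OF bounded_linear_inner_right], symmetric]
  using euclidean_representation[of u] by (simp add: inner_commute)

lemma twice_differentiable_inner: "twice_differentiable (\<lambda>x. u \<bullet> x)"
  unfolding twice_differentiable_def grad_inner
  using bounded_linear_inner_right bounded_linear_imp_differentiable by auto

lemma tangent_cone_nonzero_if_islimpt:
  fixes X :: "'e::euclidean_space set"
  assumes "x islimpt X"
  obtains v where "v \<noteq> 0" "v \<in> tangent_cone X x"
proof -
  obtain f where f: "\<And>n. f n \<in> X - {x}" "f \<longlonglongrightarrow> x"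
    using assms unfolding islimpt_sequential by blast
  define u where "u n = (f n - x) /\<^sub>R norm (f n - x)" for n
  have "\<forall>n. u n \<in> sphere 0 1"
    using f(1) by (auto simp: u_def)
  then obtain l r where l: "l \<in> sphere (0::'e) 1" "strict_mono r" "(u \<circ> r) \<longlonglongrightarrow> l"
    using compact_imp_seq_compact[OF compact_sphere] unfolding seq_compact_def by metis
  have "l \<in> tangent_cone X x"
    unfolding tangent_cone_def
  proof (intro CollectI exI conjI allI)
    show "(f \<circ> r) n \<in> X" for n
      using f(1) by auto
    show "norm (f (r n) - x) > 0" for n
      using f(1) by auto
    show "(\<lambda>n. norm (f (r n) - x)) \<longlonglongrightarrow> 0"
      using LIMSEQ_subseq_LIMSEQ[OF f(2) l(2)] by (simp add: o_def tendsto_norm_zero_iff LIM_zero_iff)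
    show "(\<lambda>n. ((f \<circ> r) n - x) /\<^sub>R norm (f (r n) - x)) \<longlonglongrightarrow> l"
      using l(3) by (simp add: u_def o_def)
  qed
  moreover have "l \<noteq> 0"
    using l(1) by auto
  ultimately show ?thesis
    using that by blast
qed

definition blk_index :: "nat \<Rightarrow> (nat \<Rightarrow> 'a::euclidean_space set) \<Rightarrow> 'a \<Rightarrow> nat" where
  "blk_index d B b = (SOME i. i < d \<and> b \<in> B i)"

lemma blk_index:
  assumes "block_structure d B" "b \<in> Basis"
  shows "blk_index d B b < d" "b \<in> B (blk_index d B b)"
proof -
  have "\<exists>i. i < d \<and> b \<in> B i"
    using assms unfolding block_structure_def by blast
  then show "blk_index d B b < d" "b \<in> B (blk_index d B b)"
    unfolding blk_index_def by (metis (mono_tags, lifting) someI_ex)+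
qed

text \<open>By \<open>linear_in_block_shift\<close>, \<open>\<phi> (z + s *\<^sub>R b) = \<phi> z + s *\<^sub>R blk_partial d B \<phi> b z\<close>
  for multilinear \<open>\<phi>\<close>: this is the partial derivative of \<open>\<phi>\<close> along \<open>b\<close>.\<close>

definition blk_partial :: "nat \<Rightarrow> (nat \<Rightarrow> 'a::euclidean_space set) \<Rightarrow> ('a \<Rightarrow> 'e) \<Rightarrow> 'a \<Rightarrow> 'a \<Rightarrow> 'e" where
  "blk_partial d B \<phi> b z = \<phi> (blk_replace B (blk_index d B b) z b)"

lemma multilinear_has_derivative:
  fixes \<phi> :: "'a::euclidean_space \<Rightarrow> 'e::real_normed_vector"
  assumes B: "block_structure d B" and \<phi>: "multilinear d B \<phi>" "continuous_on UNIV \<phi>"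
  shows "(\<phi> has_derivative (\<lambda>w. \<Sum>b\<in>Basis. (w \<bullet> b) *\<^sub>R blk_partial d B \<phi> b x)) (at x)"
proof (rule has_derivative_coordinate_shifts)
  fix b z :: 'a and s :: real
  assume "b \<in> Basis"
  with B \<phi>(1) show "\<phi> (z + s *\<^sub>R b) = \<phi> z + s *\<^sub>R blk_partial d B \<phi> b z"
    unfolding blk_partial_def multilinear_iff_linear_in_block
    by (intro linear_in_block_shift) (auto simp: blk_index block_structure_def)
next
  show "continuous_on UNIV (blk_partial d B \<phi> b)" for b
    unfolding blk_partial_def blk_replace_def
    by (intro continuous_on_compose2[OF \<phi>(2)] continuous_intros continuous_on_blk) auto
qed

lemma blk_partial_vanishes_to_second_order:
  fixes \<phi> :: "'a::euclidean_space \<Rightarrow> 'e::real_normed_vector"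
  assumes B: "block_structure d B" and \<phi>: "multilinear d B \<phi>" "continuous_on UNIV \<phi>"
    and I: "I \<subseteq> {..<d}" "3 \<le> card I" "\<forall>i\<in>I. blk B i y = 0"
    and b: "b \<in> Basis"
  shows "blk_partial d B \<phi> b y = 0"
    and "(c has_vector_derivative c') (at 0) \<Longrightarrow> c 0 = y
          \<Longrightarrow> ((\<lambda>t. blk_partial d B \<phi> b (c t) /\<^sub>R t) \<longlongrightarrow> 0) (at 0)"
proof -
  define j where "j = blk_index d B b"
  have "2 \<le> card (I - {j})"
    using I(2) diff_card_le_card_Diff[of "{j}" I] by simp
  then obtain i k where ik: "i \<in> I" "k \<in> I" "i \<noteq> k" "i \<noteq> j" "k \<noteq> j"
    by (metis card_le_Suc0_iff_eq card.infinite not_less_eq_eq numeral_2_eq_2 zero_le DiffE singletonI)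
  have d: "i < d" "j < d" "k < d"
    using I(1) ik blk_index(1)[OF B b] by (auto simp: j_def)
  have blocks: "B i \<subseteq> Basis" "B j \<subseteq> Basis" "B k \<subseteq> Basis"
    "B i \<inter> B j = {}" "B k \<inter> B j = {}" "B i \<inter> B k = {}"
    using B d ik(3-5) unfolding block_structure_def by simp_all
  have lin: "linear_in_block B i \<phi>" "linear_in_block B k \<phi>"
    using \<phi>(1) ik I(1) unfolding multilinear_iff_linear_in_block by auto
  have partial: "blk_partial d B \<phi> b = (\<lambda>z. \<phi> (blk_replace B j z b))"
    unfolding blk_partial_def j_def ..
  have lin_partial:
      "linear_in_block B i (blk_partial d B \<phi> b)" "linear_in_block B k (blk_partial d B \<phi> b)"
    unfolding partial using lin blocks by (auto intro: linear_in_block_blk_replace)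
  show "blk_partial d B \<phi> b y = 0"
    using linear_in_block_vanishes[OF lin_partial(1)] I(3) ik(1) by blast
  show "((\<lambda>t. blk_partial d B \<phi> b (c t) /\<^sub>R t) \<longlongrightarrow> 0) (at 0)"
    if "(c has_vector_derivative c') (at 0)" "c 0 = y"
  proof (rule bilinear_in_blocks_little_o[OF lin_partial blocks(1,3,6) _ _ _ that])
    show "continuous_on UNIV (blk_partial d B \<phi> b)"
      unfolding partial blk_replace_def
      by (intro continuous_on_compose2[OF \<phi>(2)] continuous_intros continuous_on_blk) auto
  qed (use I(3) ik in auto)
qed

theorem proposition5p1:
  fixes \<phi> :: "'p::euclidean_space \<Rightarrow> 'e::euclidean_space"
    and M :: "'p set" and d :: nat and B :: "nat \<Rightarrow> 'p set" and y :: 'p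
  assumes "block_structure d B"
    and "embedded_submanifold M"
    and "smooth_on UNIV \<phi>"
    and "multilinear d B \<phi>"
    and "y \<in> M"
    and "\<exists>I. I \<subseteq> {..<d} \<and> card I \<ge> 3 \<and> (\<forall>i\<in>I. blk B i y = 0)"
    and "\<phi> y = 0"
    and "0 islimpt (\<phi> ` M)"
  shows "\<not> two_implies_one \<phi> M y"
proof -
  obtain I where I: "I \<subseteq> {..<d}" "3 \<le> card I" "\<forall>i\<in>I. blk B i y = 0"
    using assms(6) by blast
  have cont: "continuous_on UNIV \<phi>"
    using assms(3) by (rule smooth_on_imp_continuous_on)
  obtain v where v: "v \<noteq> 0" "v \<in> tangent_cone (\<phi> ` M) 0"
    using tangent_cone_nonzero_if_islimpt[OF assms(8)] by blast
  have "two_critical ((\<lambda>x. (- v) \<bullet> x) \<circ> \<phi>) M y"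
    using blk_partial_vanishes_to_second_order[OF assms(1,4) cont I]
    by (intro two_critical_if_partials_vanish_to_second_order[OF
          multilinear_has_derivative[OF assms(1,4) cont]]) blast+
  moreover have "(- v) \<bullet> v < 0"
    using v(1) by simp
  then have "\<not> stationary_on (\<lambda>x. (- v) \<bullet> x) (\<phi> ` M) (\<phi> y)"
    unfolding stationary_on_def grad_inner assms(7) using v(2) by (meson not_le)
  ultimately show ?thesis
    unfolding two_implies_one_def using twice_differentiable_inner by blast
qed

end
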